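(* Let $m\in\mathbb{N}$, let $H$ be a finite field and let $\mathbb{F}$ be an extension field of $H$ of degree $[\mathbb{F}:H]=m$. Let $h_1,\dots,h_m\in H^m$ and $t_1,\dots,t_m\in\mathbb{F}$ be chosen independently and uniformly at random. Then for every set $A\subseteq\mathbb{F}^m$ with $|A|=\alpha\,|\mathbb{F}|^m$, \[ \Pr\Big[\sum_{i=1}^m t_i\, h_i\in A\Big]\le \alpha+\frac{2}{|H|}. \]
   Context: Here $H^m\subseteq\mathbb{F}^m$ via the inclusion $H\subseteq\mathbb{F}$, and $t_i h_i$ denotes scalar multiplication of the vector $h_i$ by $t_i\in\mathbb{F}$. *)

theory Defs
  imports "HOL-Algebra.Embedded_Algebras" "HOL-Library.FuncSet"
begin

definition lin_comb :: "('a, 'b) ring_scheme \<Rightarrow> nat \<Rightarrow> (nat \<Rightarrow> 'a) \<Rightarrow> (nat \<Rightarrow> nat \<Rightarrow> 'a) \<Rightarrow> (nat \<Rightarrow> 'a)"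
  where "lin_comb R m t h = (\<lambda>j\<in>{..<m}. finsum R (\<lambda>i. t i \<otimes>\<^bsub>R\<^esub> h i j) {..<m})"

end

theory Submission
  imports Defs
begin

(* If no h_k lies in the H-span of h_0, ..., h_(k-1), the h_i are linearly independent over H;
   expanding coefficients in an H-basis of F shows that they are then independent over F as well,
   so t \<mapsto> t_1 h_1 + ... + t_m h_m is injective on F^m and meets A for at most |A| values of t.
   For fixed k, a matrix whose row h_k lies in the span of the earlier rows is determined by its
   other rows and k coefficients in H, so at most |H|^(m(m-1)+k) matrices fail at k; summing over
   k gives at most 2 |H|^(m^2) / |H| bad matrices. *)

definition vec_comb :: "('a, 'b) ring_scheme \<Rightarrow> nat \<Rightarrow> nat \<Rightarrow> (nat \<Rightarrow> 'a) \<Rightarrow> (nat \<Rightarrow> nat \<Rightarrow> 'a) \<Rightarrow> (nat \<Rightarrow> 'a)"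
  where "vec_comb R k m c h = (\<lambda>j\<in>{..<m}. finsum R (\<lambda>i. c i \<otimes>\<^bsub>R\<^esub> h i j) {..<k})"

definition prefix_span :: "('a, 'b) ring_scheme \<Rightarrow> 'a set \<Rightarrow> nat \<Rightarrow> (nat \<Rightarrow> nat \<Rightarrow> 'a) \<Rightarrow> nat \<Rightarrow> (nat \<Rightarrow> 'a) set"
  where "prefix_span R K m h k = (\<lambda>c. vec_comb R k m c h) ` ({..<k} \<rightarrow>\<^sub>E K)"

definition sequentially_independent :: "('a, 'b) ring_scheme \<Rightarrow> 'a set \<Rightarrow> nat \<Rightarrow> (nat \<Rightarrow> nat \<Rightarrow> 'a) \<Rightarrow> bool"
  where "sequentially_independent R K m h \<longleftrightarrow> (\<forall>k<m. h k \<notin> prefix_span R K m h k)"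

definition vectors_independent :: "('a, 'b) ring_scheme \<Rightarrow> 'a set \<Rightarrow> nat \<Rightarrow> nat \<Rightarrow> (nat \<Rightarrow> nat \<Rightarrow> 'a) \<Rightarrow> bool"
  where "vectors_independent R K n m h \<longleftrightarrow>
    (\<forall>c\<in>{..<n} \<rightarrow> K. (\<forall>l<m. finsum R (\<lambda>i. c i \<otimes>\<^bsub>R\<^esub> h i l) {..<n} = \<zero>\<^bsub>R\<^esub>) \<longrightarrow> (\<forall>i<n. c i = \<zero>\<^bsub>R\<^esub>))"

lemma lin_comb_eq_vec_comb: "lin_comb R m t h = vec_comb R m m t h"
  unfolding lin_comb_def vec_comb_def ..

context ring begin

lemma vectors_independentD:
  assumes "vectors_independent R K n m h" "c \<in> {..<n} \<rightarrow> K"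
    "\<And>l. l < m \<Longrightarrow> (\<Oplus>i\<in>{..<n}. c i \<otimes> h i l) = \<zero>" "i < n"
  shows "c i = \<zero>"
  using assms unfolding vectors_independent_def by blast

lemma finsum_mem_subring:
  assumes "subring H R" "finite A" "f \<in> A \<rightarrow> H"
  shows "finsum R f A \<in> H"
  using assms(2,3)
proof (induction A rule: finite_induct)
  case empty then show ?case using subringE(2)[OF assms(1)] by simp
next
  case (insert a A)
  have "finsum R f (insert a A) = f a \<oplus> finsum R f A"
    using insert subringE(1)[OF assms(1)] by (intro finsum_insert) auto
  then show ?case using insert subringE(7)[OF assms(1)] by auto
qed

lemma finsum_swap:
  assumes "finite A" "finite B" "\<And>i j. i \<in> A \<Longrightarrow> j \<in> B \<Longrightarrow> f i j \<in> carrier R"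
  shows "(\<Oplus>i\<in>A. \<Oplus>j\<in>B. f i j) = (\<Oplus>j\<in>B. \<Oplus>i\<in>A. f i j)"
  using assms(1,3)
proof (induction A rule: finite_induct)
  case empty then show ?case by (simp add: finsum_zero)
next
  case (insert a A)
  have "(\<Oplus>i\<in>insert a A. \<Oplus>j\<in>B. f i j) = (\<Oplus>j\<in>B. f a j) \<oplus> (\<Oplus>j\<in>B. \<Oplus>i\<in>A. f i j)"
    using insert by (subst finsum_insert) auto
  also have "\<dots> = (\<Oplus>j\<in>B. f a j \<oplus> (\<Oplus>i\<in>A. f i j))"
    using insert by (intro finsum_addf[symmetric]) auto
  also have "\<dots> = (\<Oplus>j\<in>B. \<Oplus>i\<in>insert a A. f i j)"
    using insert by (intro finsum_cong') (auto simp: finsum_insert)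
  finally show ?case .
qed

lemma finsum_diff:
  assumes "finite A" "f \<in> A \<rightarrow> carrier R" "g \<in> A \<rightarrow> carrier R"
  shows "(\<Oplus>i\<in>A. f i \<ominus> g i) = finsum R f A \<ominus> finsum R g A"
  using assms
proof (induction A rule: finite_induct)
  case empty then show ?case by (simp add: minus_eq)
next
  case (insert a A)
  have closed: "f a \<in> carrier R" "g a \<in> carrier R" "finsum R f A \<in> carrier R" "finsum R g A \<in> carrier R"
    using insert by auto
  have "(\<Oplus>i\<in>insert a A. f i \<ominus> g i) = (f a \<ominus> g a) \<oplus> (finsum R f A \<ominus> finsum R g A)"
    using insert by (subst finsum_insert) (auto simp: minus_eq)
  also have "\<dots> = (f a \<oplus> finsum R f A) \<ominus> (g a \<oplus> finsum R g A)"
    using closed by algebra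
  also have "\<dots> = finsum R f (insert a A) \<ominus> finsum R g (insert a A)"
    using insert by (simp add: finsum_insert)
  finally show ?case .
qed

lemma finsum_lessThan_Suc:
  assumes "f \<in> {..<Suc n} \<rightarrow> carrier R"
  shows "(\<Oplus>i\<in>{..<Suc n}. f i) = f n \<oplus> (\<Oplus>i\<in>{..<n}. f i)"
  using assms unfolding lessThan_Suc by (intro finsum_insert) auto

lemma combine_eq_finsum:
  "\<lbrakk> length Ks = n; length Us = n; set Ks \<subseteq> carrier R; set Us \<subseteq> carrier R \<rbrakk> \<Longrightarrow>
   combine Ks Us = (\<Oplus>j\<in>{..<n}. Ks ! j \<otimes> Us ! j)"
proof (induction Ks arbitrary: Us n)
  case Nil then show ?case by simp
next
  case (Cons k Ks)
  then obtain u Us' n' where U: "Us = u # Us'" and n: "n = Suc n'"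
    by (cases Us) auto
  have closed: "(\<lambda>j. (k # Ks) ! j \<otimes> Us ! j) \<in> insert 0 (Suc ` {..<n'}) \<rightarrow> carrier R"
    using Cons.prems by (auto simp: U n intro!: m_closed dest: nth_mem)
  have "(\<Oplus>j\<in>{..<Suc n'}. (k # Ks) ! j \<otimes> Us ! j) = k \<otimes> u \<oplus> (\<Oplus>j\<in>{..<n'}. Ks ! j \<otimes> Us' ! j)"
    using closed by (simp add: lessThan_Suc_eq_insert_0 finsum_insert finsum_reindex U)
  then show ?case using Cons U n by simp
qed

lemma vec_comb_cong:
  assumes "c \<in> {..<k} \<rightarrow> carrier R" "\<And>i j. i < k \<Longrightarrow> j < m \<Longrightarrow> h i j \<in> carrier R"
    and "\<And>i. i < k \<Longrightarrow> g i = h i"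
  shows "vec_comb R k m c g = vec_comb R k m c h"
  using assms unfolding vec_comb_def by (intro restrict_ext finsum_cong') auto

lemma exists_finsum_basis:
  assumes K: "subfield K R" and d: "dimension d K (carrier R)"
  obtains b where "b \<in> {..<d} \<rightarrow> carrier R"
    and "\<And>s. s \<in> carrier R \<Longrightarrow> \<exists>c\<in>{..<d} \<rightarrow> K. s = (\<Oplus>j\<in>{..<d}. c j \<otimes> b j)"
    and "\<And>c. \<lbrakk> c \<in> {..<d} \<rightarrow> K; (\<Oplus>j\<in>{..<d}. c j \<otimes> b j) = \<zero> \<rbrakk> \<Longrightarrow> \<forall>j<d. c j = \<zero>"
proof -
  obtain Vs where Vs: "set Vs \<subseteq> carrier R" "independent K Vs" "length Vs = d" "Span K Vs = carrier R"
    using exists_base[OF K d] by blast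
  have KR: "K \<subseteq> carrier R" using subfieldE(3)[OF K] .
  have b: "(\<lambda>j. Vs ! j) \<in> {..<d} \<rightarrow> carrier R" using Vs(1,3) by auto
  show thesis
  proof
    show "(\<lambda>j. Vs ! j) \<in> {..<d} \<rightarrow> carrier R" by (fact b)
  next
    fix s assume "s \<in> carrier R"
    then obtain Ks where Ks: "set Ks \<subseteq> K" "length Ks = d" "s = combine Ks Vs"
      using Span_mem_iff_length_version[OF K Vs(1)] Vs(3,4) by auto
    have "s = (\<Oplus>j\<in>{..<d}. Ks ! j \<otimes> Vs ! j)"
      using Ks Vs(1,3) KR by (simp add: combine_eq_finsum)
    moreover have "(\<lambda>j. Ks ! j) \<in> {..<d} \<rightarrow> K" using Ks(1,2) nth_mem by fastforce
    ultimately show "\<exists>c\<in>{..<d} \<rightarrow> K. s = (\<Oplus>j\<in>{..<d}. c j \<otimes> Vs ! j)" by blast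
  next
    fix c assume c: "c \<in> {..<d} \<rightarrow> K" and zero: "(\<Oplus>j\<in>{..<d}. c j \<otimes> Vs ! j) = \<zero>"
    define Ks where "Ks = map c [0..<d]"
    have Ks: "set Ks \<subseteq> K" "length Ks = d" using c by (auto simp: Ks_def)
    have "combine Ks Vs = (\<Oplus>j\<in>{..<d}. c j \<otimes> Vs ! j)"
      using Ks Vs(1,3) KR c b
      by (subst combine_eq_finsum) (auto simp: Ks_def Pi_iff subset_eq intro!: finsum_cong')
    then have "set Ks \<subseteq> {\<zero>}"
      using independent_imp_trivial_combine[OF K Vs(2) Ks(1)] zero Ks(2) Vs(3) by simp
    then show "\<forall>j<d. c j = \<zero>" by (auto simp: Ks_def image_subset_iff)
  qed
qed

lemma mem_prefix_span_if_last_coeff_nonzero: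
  assumes K: "subfield K R"
    and hn: "h n \<in> {..<m} \<rightarrow>\<^sub>E K" and h: "\<And>i l. i < n \<Longrightarrow> l < m \<Longrightarrow> h i l \<in> K"
    and c: "c \<in> {..<Suc n} \<rightarrow> K" "c n \<noteq> \<zero>"
    and zero: "\<And>l. l < m \<Longrightarrow> (\<Oplus>i\<in>{..<Suc n}. c i \<otimes> h i l) = \<zero>"
  shows "h n \<in> prefix_span R K m h n"
proof -
  have KR: "K \<subseteq> carrier R" using subfieldE(3)[OF K] .
  have cR: "\<And>i. i \<le> n \<Longrightarrow> c i \<in> carrier R" and hR: "\<And>i l. i < n \<Longrightarrow> l < m \<Longrightarrow> h i l \<in> carrier R"
    using c(1) h KR by auto
  define a where "a = \<ominus> m_inv R (c n)"
  have inv: "m_inv R (c n) \<in> K" "m_inv R (c n) \<otimes> c n = \<one>"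
    using subfield_m_inv[OF K, of "c n"] c by auto
  have "a \<in> K" using inv(1) subringE(5)[OF subfieldE(1)[OF K]] unfolding a_def by blast
  then have coeff: "(\<lambda>i\<in>{..<n}. a \<otimes> c i) \<in> {..<n} \<rightarrow>\<^sub>E K"
    using c(1) subringE(6)[OF subfieldE(1)[OF K]] by (auto simp: Pi_iff)
  have expand: "h n l = (\<Oplus>i\<in>{..<n}. a \<otimes> c i \<otimes> h i l)" if l: "l < m" for l
  proof -
    define S where "S = (\<Oplus>i\<in>{..<n}. c i \<otimes> h i l)"
    have closed: "c n \<in> carrier R" "h n l \<in> carrier R" "m_inv R (c n) \<in> carrier R" "S \<in> carrier R"
      using cR hR hn l inv(1) KR unfolding S_def by (auto intro!: finsum_closed)
    have "c n \<otimes> h n l \<oplus> S = \<zero>"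
      using zero[OF l] closed cR hR l by (subst (asm) finsum_lessThan_Suc) (auto simp: S_def less_Suc_eq)
    then have "h n l = m_inv R (c n) \<otimes> (c n \<otimes> h n l)" and "c n \<otimes> h n l = \<ominus> S"
      using closed inv(2) by (auto simp: m_assoc[symmetric] intro: minus_equality[symmetric])
    then have "h n l = a \<otimes> S" using closed by (simp add: a_def l_minus r_minus)
    also have "\<dots> = (\<Oplus>i\<in>{..<n}. a \<otimes> c i \<otimes> h i l)"
      unfolding S_def using closed cR hR l
      by (subst finsum_rdistr) (auto simp: a_def m_assoc intro!: finsum_cong')
    finally show ?thesis .
  qed
  have "h n = vec_comb R n m (\<lambda>i\<in>{..<n}. a \<otimes> c i) h"
  proof
    fix j
    have "a \<in> carrier R" using \<open>a \<in> K\<close> KR by blast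
    then show "h n j = vec_comb R n m (\<lambda>i\<in>{..<n}. a \<otimes> c i) h j"
      using hn expand cR hR by (cases "j < m") (auto simp: vec_comb_def PiE_def extensional_def intro!: finsum_cong')
  qed
  then show ?thesis using coeff unfolding prefix_span_def by blast
qed

lemma sequentially_independent_imp_vectors_independent:
  assumes K: "subfield K R" and h: "h \<in> {..<m} \<rightarrow>\<^sub>E ({..<m} \<rightarrow>\<^sub>E K)"
    and seq: "sequentially_independent R K m h"
  shows "vectors_independent R K m m h"
proof -
  have "vectors_independent R K n m h" if "n \<le> m" for n
    using that
  proof (induction n)
    case 0 then show ?case by (simp add: vectors_independent_def)
  next
    case (Suc n)
    have KR: "K \<subseteq> carrier R" using subfieldE(3)[OF K] .
    show ?case unfolding vectors_independent_def
    proof (intro ballI impI)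
      fix c assume c: "c \<in> {..<Suc n} \<rightarrow> K"
        and zero: "\<forall>l<m. (\<Oplus>i\<in>{..<Suc n}. c i \<otimes> h i l) = \<zero>"
      have hK: "h n \<in> {..<m} \<rightarrow>\<^sub>E K" "\<And>i l. i < n \<Longrightarrow> l < m \<Longrightarrow> h i l \<in> K"
        using h Suc.prems by (simp_all add: PiE_iff)
      have "c n = \<zero>"
      proof (rule ccontr)
        assume "c n \<noteq> \<zero>"
        with K hK c zero show False
          using mem_prefix_span_if_last_coeff_nonzero[of K h n m c] seq Suc.prems
          unfolding sequentially_independent_def by simp
      qed
      have prefix_zero: "(\<Oplus>i\<in>{..<n}. c i \<otimes> h i l) = \<zero>" if l: "l < m" for l
      proof -
        have closed: "(\<lambda>i. c i \<otimes> h i l) \<in> {..<n} \<rightarrow> carrier R" "h n l \<in> carrier R" "c n \<in> carrier R"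
          using c hK l KR by (auto intro!: m_closed)
        then have "(\<Oplus>i\<in>{..<Suc n}. c i \<otimes> h i l) = c n \<otimes> h n l \<oplus> (\<Oplus>i\<in>{..<n}. c i \<otimes> h i l)"
          by (intro finsum_lessThan_Suc) (auto simp: less_Suc_eq)
        then show ?thesis
          using zero l \<open>c n = \<zero>\<close> closed by simp
      qed
      have "vectors_independent R K n m h" using Suc by simp
      moreover have "c \<in> {..<n} \<rightarrow> K" using c by (auto simp: Pi_iff)
      ultimately have "\<forall>i<n. c i = \<zero>" using prefix_zero by (auto intro: vectors_independentD)
      then show "\<forall>i<Suc n. c i = \<zero>" using \<open>c n = \<zero>\<close> less_Suc_eq by auto
    qed
  qed
  then show ?thesis by simp
qed

lemma inj_on_vec_comb:
  assumes indep: "vectors_independent R (carrier R) n m h"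
    and h: "\<And>i l. i < n \<Longrightarrow> l < m \<Longrightarrow> h i l \<in> carrier R"
  shows "inj_on (\<lambda>t. vec_comb R n m t h) ({..<n} \<rightarrow>\<^sub>E carrier R)"
proof
  fix t t' assume t: "t \<in> {..<n} \<rightarrow>\<^sub>E carrier R" and t': "t' \<in> {..<n} \<rightarrow>\<^sub>E carrier R"
    and eq: "vec_comb R n m t h = vec_comb R n m t' h"
  have tR: "\<And>i. i < n \<Longrightarrow> t i \<in> carrier R" "\<And>i. i < n \<Longrightarrow> t' i \<in> carrier R"
    using t t' by auto
  have diff_zero: "(\<Oplus>i\<in>{..<n}. (t i \<ominus> t' i) \<otimes> h i l) = \<zero>" if l: "l < m" for l
  proof -
    have "(\<Oplus>i\<in>{..<n}. (t i \<ominus> t' i) \<otimes> h i l) = (\<Oplus>i\<in>{..<n}. t i \<otimes> h i l \<ominus> t' i \<otimes> h i l)"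
      using tR h l by (intro finsum_cong') (auto simp: minus_eq l_distr l_minus)
    also have "\<dots> = (\<Oplus>i\<in>{..<n}. t i \<otimes> h i l) \<ominus> (\<Oplus>i\<in>{..<n}. t' i \<otimes> h i l)"
      using tR h l by (intro finsum_diff) auto
    also have "\<dots> = \<zero>"
      using fun_cong[OF eq, of l] l tR h by (simp add: vec_comb_def r_neg minus_eq)
    finally show ?thesis .
  qed
  have "(\<lambda>i. t i \<ominus> t' i) \<in> {..<n} \<rightarrow> carrier R" using tR by auto
  then have "\<forall>i<n. t i \<ominus> t' i = \<zero>"
    using vectors_independentD[OF indep _ diff_zero] by blast
  then show "t = t'"
    using t t' tR by (intro PiE_ext) (auto simp: r_right_minus_eq)
qed

end

context cring begin

lemma finsum_expand_coeffs:
  assumes "finite A" "finite B" "\<And>i j. i \<in> A \<Longrightarrow> j \<in> B \<Longrightarrow> C i j \<in> carrier R"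
    and "b \<in> B \<rightarrow> carrier R" "x \<in> A \<rightarrow> carrier R"
  shows "(\<Oplus>i\<in>A. (\<Oplus>j\<in>B. C i j \<otimes> b j) \<otimes> x i) = (\<Oplus>j\<in>B. (\<Oplus>i\<in>A. C i j \<otimes> x i) \<otimes> b j)"
proof -
  have closed: "\<And>j. j \<in> B \<Longrightarrow> b j \<in> carrier R" "\<And>i. i \<in> A \<Longrightarrow> x i \<in> carrier R"
    using assms(4,5) by auto
  have "(\<Oplus>i\<in>A. (\<Oplus>j\<in>B. C i j \<otimes> b j) \<otimes> x i) = (\<Oplus>i\<in>A. \<Oplus>j\<in>B. C i j \<otimes> x i \<otimes> b j)"
  proof (intro finsum_cong')
    fix i assume i: "i \<in> A"
    have "(\<Oplus>j\<in>B. C i j \<otimes> b j) \<otimes> x i = (\<Oplus>j\<in>B. C i j \<otimes> b j \<otimes> x i)"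
      using assms i by (intro finsum_ldistr) auto
    also have "\<dots> = (\<Oplus>j\<in>B. C i j \<otimes> x i \<otimes> b j)"
      using assms(3) closed i by (intro finsum_cong') (auto simp: m_ac)
    finally show "(\<Oplus>j\<in>B. C i j \<otimes> b j) \<otimes> x i = (\<Oplus>j\<in>B. C i j \<otimes> x i \<otimes> b j)" .
  qed (use assms(3) closed in \<open>auto intro!: finsum_closed\<close>)
  also have "\<dots> = (\<Oplus>j\<in>B. \<Oplus>i\<in>A. C i j \<otimes> x i \<otimes> b j)"
    using assms(1-3) closed by (intro finsum_swap) auto
  also have "\<dots> = (\<Oplus>j\<in>B. (\<Oplus>i\<in>A. C i j \<otimes> x i) \<otimes> b j)"
    using assms(1,3) closed by (intro finsum_cong') (auto simp: finsum_ldistr)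
  finally show ?thesis .
qed

lemma vectors_independent_over_carrier:
  assumes K: "subfield K R" and d: "dimension d K (carrier R)"
    and h: "\<And>i l. i < n \<Longrightarrow> l < m \<Longrightarrow> h i l \<in> K"
    and indep: "vectors_independent R K n m h"
  shows "vectors_independent R (carrier R) n m h"
  unfolding vectors_independent_def
proof (intro ballI impI)
  fix s assume s: "s \<in> {..<n} \<rightarrow> carrier R"
    and zero: "\<forall>l<m. (\<Oplus>i\<in>{..<n}. s i \<otimes> h i l) = \<zero>"
  obtain b where b: "b \<in> {..<d} \<rightarrow> carrier R"
    and span: "\<And>s. s \<in> carrier R \<Longrightarrow> \<exists>c\<in>{..<d} \<rightarrow> K. s = (\<Oplus>j\<in>{..<d}. c j \<otimes> b j)"
    and basis_indep: "\<And>c. \<lbrakk> c \<in> {..<d} \<rightarrow> K; (\<Oplus>j\<in>{..<d}. c j \<otimes> b j) = \<zero> \<rbrakk> \<Longrightarrow> \<forall>j<d. c j = \<zero>"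
    using exists_finsum_basis[OF K d] by blast
  have "\<forall>i\<in>{..<n}. \<exists>c. c \<in> {..<d} \<rightarrow> K \<and> s i = (\<Oplus>j\<in>{..<d}. c j \<otimes> b j)"
    using span s by blast
  then obtain C where C: "\<And>i. i < n \<Longrightarrow> C i \<in> {..<d} \<rightarrow> K \<and> s i = (\<Oplus>j\<in>{..<d}. C i j \<otimes> b j)"
    using bchoice[of "{..<n}"] by (metis lessThan_iff)
  have KR: "K \<subseteq> carrier R" using subfieldE(3)[OF K] .
  have CK: "\<And>i j. i < n \<Longrightarrow> j < d \<Longrightarrow> C i j \<in> K" using C by blast
  have closed: "\<And>i j. i < n \<Longrightarrow> j < d \<Longrightarrow> C i j \<in> carrier R" "\<And>j. j < d \<Longrightarrow> b j \<in> carrier R"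
    "\<And>i l. i < n \<Longrightarrow> l < m \<Longrightarrow> h i l \<in> carrier R"
    using CK b h KR by auto
  have column_zero: "(\<Oplus>i\<in>{..<n}. C i j \<otimes> h i l) = \<zero>" if j: "j < d" and l: "l < m" for j l
  proof -
    have coeffs: "(\<lambda>j. \<Oplus>i\<in>{..<n}. C i j \<otimes> h i l) \<in> {..<d} \<rightarrow> K"
      using CK h l subringE(6)[OF subfieldE(1)[OF K]]
      by (auto intro!: finsum_mem_subring[OF subfieldE(1)[OF K]])
    have "(\<Oplus>j\<in>{..<d}. (\<Oplus>i\<in>{..<n}. C i j \<otimes> h i l) \<otimes> b j)
        = (\<Oplus>i\<in>{..<n}. (\<Oplus>j\<in>{..<d}. C i j \<otimes> b j) \<otimes> h i l)"
      using closed l by (intro finsum_expand_coeffs[symmetric]) auto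
    also have "\<dots> = (\<Oplus>i\<in>{..<n}. s i \<otimes> h i l)"
      using C s closed l by (intro finsum_cong') auto
    also have "\<dots> = \<zero>" using zero l by simp
    finally have "\<forall>j<d. (\<Oplus>i\<in>{..<n}. C i j \<otimes> h i l) = \<zero>" by (rule basis_indep[OF coeffs])
    then show ?thesis using j by blast
  qed
  have C_zero: "C i j = \<zero>" if "i < n" "j < d" for i j
    using vectors_independentD[OF indep _ column_zero] CK that by (simp add: Pi_iff)
  show "\<forall>i<n. s i = \<zero>"
  proof (intro allI impI)
    fix i assume i: "i < n"
    have "s i = (\<Oplus>j\<in>{..<d}. C i j \<otimes> b j)" using C i by blast
    also have "\<dots> = (\<Oplus>j\<in>{..<d}. \<zero>)" using C_zero i closed by (intro finsum_cong') auto
    also have "\<dots> = \<zero>" by (rule finsum_zero)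
    finally show "s i = \<zero>" .
  qed
qed

lemma card_lin_comb_preimage_le:
  assumes K: "subfield K R" and d: "dimension d K (carrier R)"
    and h: "h \<in> {..<m} \<rightarrow>\<^sub>E ({..<m} \<rightarrow>\<^sub>E K)" and seq: "sequentially_independent R K m h"
    and A: "finite A"
  shows "card {t \<in> {..<m} \<rightarrow>\<^sub>E carrier R. lin_comb R m t h \<in> A} \<le> card A"
proof -
  have entries: "\<And>i l. i < m \<Longrightarrow> l < m \<Longrightarrow> h i l \<in> K" using h by auto
  have "vectors_independent R (carrier R) m m h"
    using vectors_independent_over_carrier[OF K d, where n = m and m = m and h = h]
      sequentially_independent_imp_vectors_independent[OF K h seq] entries by blast
  then have "inj_on (\<lambda>t. lin_comb R m t h) ({..<m} \<rightarrow>\<^sub>E carrier R)"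
    using entries subfieldE(3)[OF K] unfolding lin_comb_eq_vec_comb by (intro inj_on_vec_comb) auto
  from card_vimage_inj_on_le[OF this A] show ?thesis
    by (simp add: vimage_def Int_def conj_commute)
qed

end

lemma sum_powers_le_twice_last:
  fixes q :: real assumes q: "q \<ge> 2"
  shows "(\<Sum>k<m. q ^ k) \<le> 2 * q ^ m / q"
proof (induction m)
  case 0 show ?case using q by simp
next
  case (Suc m)
  have "(\<Sum>k<Suc m. q ^ k) \<le> 2 * q ^ m / q + q ^ m" using Suc by simp
  also have "\<dots> \<le> 2 * q ^ Suc m / q"
    using q by (simp add: field_simps)
  finally show ?case .
qed

context ring begin

lemma card_prefix_dependent_at:
  assumes KR: "K \<subseteq> carrier R" and K: "finite K" and k: "k < m"
  shows "card {h \<in> {..<m} \<rightarrow>\<^sub>E ({..<m} \<rightarrow>\<^sub>E K). h k \<in> prefix_span R K m h k}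
    \<le> card K ^ (m * (m - 1) + k)"
proof -
  define V where "V = {..<m} \<rightarrow>\<^sub>E K"
  define G where "G = ({..<m} - {k}) \<rightarrow>\<^sub>E V"
  define C where "C = {..<k} \<rightarrow>\<^sub>E K"
  define extend where "extend = (\<lambda>(g, c). g(k := vec_comb R k m c g))"
  have "{h \<in> {..<m} \<rightarrow>\<^sub>E V. h k \<in> prefix_span R K m h k} \<subseteq> extend ` (G \<times> C)"
  proof safe
    fix h assume h: "h \<in> {..<m} \<rightarrow>\<^sub>E V" and "h k \<in> prefix_span R K m h k"
    then obtain c where c: "c \<in> C" and hk: "h k = vec_comb R k m c h"
      unfolding prefix_span_def C_def by blast
    have "h(k := undefined) \<in> G"
      using h k unfolding G_def by (auto simp: PiE_iff)
    moreover have "vec_comb R k m c (h(k := undefined)) = vec_comb R k m c h"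
      using c h k KR by (intro vec_comb_cong) (auto simp: C_def V_def PiE_iff subset_eq)
    then have "extend (h(k := undefined), c) = h" using hk by (auto simp: extend_def)
    ultimately show "h \<in> extend ` (G \<times> C)" using c by force
  qed
  moreover have "finite G" "finite C" unfolding G_def C_def V_def using K by (auto intro!: finite_PiE)
  ultimately have "card {h \<in> {..<m} \<rightarrow>\<^sub>E V. h k \<in> prefix_span R K m h k} \<le> card (G \<times> C)"
    by (meson card_image_le card_mono finite_SigmaI order_trans finite_imageI)
  also have "card (G \<times> C) = card K ^ (m * (m - 1) + k)"
    using k by (simp add: G_def C_def V_def card_cartesian_product card_PiE card_Diff_singleton
        power_mult power_add)
  finally show ?thesis unfolding V_def .
qed

lemma card_not_sequentially_independent:
  assumes KR: "K \<subseteq> carrier R" and K: "finite K" "card K \<ge> 2"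
  shows "real (card {h \<in> {..<m} \<rightarrow>\<^sub>E ({..<m} \<rightarrow>\<^sub>E K). \<not> sequentially_independent R K m h})
    \<le> 2 * real (card K) ^ (m * m) / real (card K)"
proof (cases "m = 0")
  case True then show ?thesis by (simp add: sequentially_independent_def)
next
  case False
  let ?M = "{..<m} \<rightarrow>\<^sub>E ({..<m} \<rightarrow>\<^sub>E K)"
  have "{h \<in> ?M. \<not> sequentially_independent R K m h}
      = (\<Union>k<m. {h \<in> ?M. h k \<in> prefix_span R K m h k})"
    unfolding sequentially_independent_def by blast
  then have "card {h \<in> ?M. \<not> sequentially_independent R K m h}
      \<le> (\<Sum>k<m. card {h \<in> ?M. h k \<in> prefix_span R K m h k})"
    by (simp add: card_UN_le)
  also have "\<dots> \<le> (\<Sum>k<m. card K ^ (m * (m - 1) + k))"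
    using card_prefix_dependent_at[OF KR K(1)] by (intro sum_mono) simp
  finally have "real (card {h \<in> ?M. \<not> sequentially_independent R K m h})
      \<le> real (\<Sum>k<m. card K ^ (m * (m - 1) + k))"
    by (rule of_nat_mono)
  also have "\<dots> = real (card K) ^ (m * (m - 1)) * (\<Sum>k<m. real (card K) ^ k)"
    by (simp add: power_add sum_distrib_left)
  also have "\<dots> \<le> real (card K) ^ (m * (m - 1)) * (2 * real (card K) ^ m / real (card K))"
    using sum_powers_le_twice_last[of "real (card K)" m] K(2) by (intro mult_left_mono) simp_all
  also have "\<dots> = 2 * real (card K) ^ (m * m) / real (card K)"
    using False by (simp add: power_add[symmetric] algebra_simps)
  finally show ?thesis .
qed

end

lemma (in domain) two_le_card_subring:
  assumes "subring H R" "finite H"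
  shows "2 \<le> card H"
proof -
  have "{\<zero>, \<one>} \<subseteq> H" using subringE(2,3)[OF assms(1)] by simp
  moreover have "card {\<zero>, \<one>} = 2" using one_not_zero by simp
  ultimately show ?thesis using card_mono[OF assms(2)] by metis
qed

lemma card_Sigma_le_split:
  assumes "finite M" "finite T" "B \<subseteq> M" "\<And>x. x \<in> M \<Longrightarrow> S x \<subseteq> T"
    and "\<And>x. x \<in> M - B \<Longrightarrow> card (S x) \<le> a"
  shows "card (Sigma M S) \<le> card M * a + card B * card T"
proof -
  have "card (Sigma M S) = (\<Sum>x\<in>M. card (S x))"
    using assms(1,2,4) by (intro card_SigmaI) (auto intro: finite_subset)
  also have "\<dots> \<le> (\<Sum>x\<in>M. a + (if x \<in> B then card T else 0))"
    using assms(2,4,5) by (intro sum_mono) (auto intro: card_mono trans_le_add2)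
  also have "\<dots> = card M * a + card B * card T"
    using assms(1,3) by (simp add: sum.distrib sum.If_cases Int_absorb1)
  finally show ?thesis .
qed

lemma ratio_le_of_count_le:
  fixes P Q N a b q :: real
  assumes "P \<le> Q * a + b * N" "b \<le> 2 * Q / q" "Q > 0" "N > 0"
  shows "P / (Q * N) \<le> a / N + 2 / q"
proof -
  have "P / (Q * N) \<le> (Q * a + b * N) / (Q * N)"
    using assms by (intro divide_right_mono) auto
  also have "\<dots> = a / N + b / Q" using assms(3,4) by (simp add: field_simps)
  also have "b / Q \<le> (2 * Q / q) / Q" using assms(2,3) by (intro divide_right_mono) auto
  also have "(2 * Q / q) / Q = 2 / q" using assms(3) by simp
  finally show ?thesis by simp
qed

theorem mainTheorem3:
  fixes R :: "('a, 'b) ring_scheme" (structure)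
    and H :: "'a set" and m :: nat and A :: "(nat \<Rightarrow> 'a) set"
  assumes "field R"
    and "finite (carrier R)"
    and "subfield H R"
    and "ring.dimension R m H (carrier R)"
    and "A \<subseteq> {..<m} \<rightarrow>\<^sub>E carrier R"
  shows "real (card {(h, t). h \<in> {..<m} \<rightarrow>\<^sub>E ({..<m} \<rightarrow>\<^sub>E H)
                          \<and> t \<in> {..<m} \<rightarrow>\<^sub>E carrier R
                          \<and> lin_comb R m t h \<in> A})
           / (real (card H) ^ (m * m) * real (card (carrier R)) ^ m)
         \<le> real (card A) / real (card (carrier R)) ^ m + 2 / real (card H)"
proof -
  interpret field R by fact
  define M where "M = {..<m} \<rightarrow>\<^sub>E ({..<m} \<rightarrow>\<^sub>E H)"
  define T where "T = {..<m} \<rightarrow>\<^sub>E carrier R"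
  define Bad where "Bad = {h \<in> M. \<not> sequentially_independent R H m h}"
  have HR: "H \<subseteq> carrier R" using subfieldE(3)[OF assms(3)] .
  have finite: "finite H" "finite M" "finite T" "finite A"
    using finite_subset[OF HR assms(2)] finite_subset[OF assms(5)] assms(2)
    unfolding M_def T_def by (simp_all add: finite_PiE)
  have H2: "card H \<ge> 2" using two_le_card_subring[OF subfieldE(1)[OF assms(3)] finite(1)] .
  have fibre: "card {t \<in> T. lin_comb R m t h \<in> A} \<le> card A" if "h \<in> M - Bad" for h
    using card_lin_comb_preimage_le[OF assms(3,4) _ _ finite(4)] that by (simp add: M_def T_def Bad_def)
  have "{(h, t). h \<in> M \<and> t \<in> T \<and> lin_comb R m t h \<in> A} = Sigma M (\<lambda>h. {t \<in> T. lin_comb R m t h \<in> A})"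
    by blast
  also have "card \<dots> \<le> card M * card A + card Bad * card T"
    using finite(2,3) fibre by (intro card_Sigma_le_split) (auto simp: Bad_def)
  finally have count: "card {(h, t). h \<in> M \<and> t \<in> T \<and> lin_comb R m t h \<in> A}
      \<le> card M * card A + card Bad * card T" .
  have "card M = card H ^ (m * m)" "card T = card (carrier R) ^ m"
    unfolding M_def T_def by (simp_all add: card_PiE power_mult)
  with of_nat_mono[OF count]
  have "real (card {(h, t). h \<in> M \<and> t \<in> T \<and> lin_comb R m t h \<in> A})
      \<le> real (card H) ^ (m * m) * real (card A) + real (card Bad) * real (card (carrier R)) ^ m"
    by simp
  moreover have "real (card Bad) \<le> 2 * real (card H) ^ (m * m) / real (card H)"
    using card_not_sequentially_independent[OF HR finite(1) H2] by (simp add: Bad_def M_def)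
  moreover have "card (carrier R) > 0" using assms(2) by (auto simp: card_gt_0_iff)
  ultimately show ?thesis
    using H2 unfolding M_def T_def by (intro ratio_le_of_count_le) auto
qed

end
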